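(* Let $(g(x))_{x\ge0}$ be a semigroup of linear maps on a real finite-dimensional vector space $V$. Then there exists a decomposition $V=\bigoplus_{i=1}^n V_i$ with $\dim V_i\ge1$ such that each $V_i$ is $g(x)$-invariant for all $x\ge0$, and for each $i$ one of the following holds: (1) for every $x\ge0$, $g(x)|_{V_i}$ has exactly one eigenvalue $\lambda(x)$ (over $\mathbb C$), and $\lambda(x)$ is real with $\lambda(x)\ge0$; or (2) for every $x\ge0$, the set of (complex) eigenvalues of $g(x)|_{V_i}$ is contained in $\{\lambda(x),\overline{\lambda(x)}\}$ for some $\lambda(x)\in\mathbb C$, and $\lambda(x)\notin\mathbb R$ for at least one $x\ge0$.
   Context: A semigroup is a map $g:[0,\infty)\to L(V)$ with $g(0)=\mathrm{id}$ and $g(x+y)=g(x)g(y)$ for all $x,y\ge0$, where $L(V)$ denotes the linear maps $V\to V$. *)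

theory Defs
  imports "HOL-Analysis.Analysis"
begin

definition lin_semigroup :: "(real \<Rightarrow> 'a::real_vector \<Rightarrow> 'a) \<Rightarrow> bool" where
  "lin_semigroup g \<longleftrightarrow> (\<forall>x\<ge>0. linear (g x)) \<and> g 0 = id \<and>
     (\<forall>x\<ge>0. \<forall>y\<ge>0. g (x + y) = g x \<circ> g y)"

text \<open>mu is a (complex) eigenvalue of the restriction of the real linear map A to the
  invariant subspace W, i.e. an eigenvalue of the complexification of A restricted to W:
  there is a nonzero u + i w (u, w in W) with A(u + i w) = mu (u + i w).\<close>
definition complex_eigenvalue_on :: "('a::real_vector \<Rightarrow> 'a) \<Rightarrow> 'a set \<Rightarrow> complex \<Rightarrow> bool" where
  "complex_eigenvalue_on A W \<mu> \<longleftrightarrow>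
     (\<exists>u w. u \<in> W \<and> w \<in> W \<and> (u \<noteq> 0 \<or> w \<noteq> 0) \<and>
        A u = Re \<mu> *\<^sub>R u - Im \<mu> *\<^sub>R w \<and>
        A w = Im \<mu> *\<^sub>R u + Re \<mu> *\<^sub>R w)"

definition is_direct_sum :: "nat \<Rightarrow> (nat \<Rightarrow> 'a::real_vector set) \<Rightarrow> bool" where
  "is_direct_sum n Vs \<longleftrightarrow> (\<forall>i<n. subspace (Vs i)) \<and>
     (\<forall>v. \<exists>!f. (\<forall>i<n. f i \<in> Vs i) \<and> (\<forall>i\<ge>n. f i = 0) \<and> v = (\<Sum>i<n. f i))"

end

theory Submission
  imports Defs
begin

text \<open>
  By induction on the dimension of a subspace \<open>W\<close> invariant under all \<open>g x\<close>. Suppose some \<open>g x\<close> has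
  eigenvalues \<open>\<mu>\<close> and \<open>\<nu>\<close> on \<open>W\<close> with \<open>\<nu> \<notin> {\<mu>, cnj \<mu>}\<close>. The real operator
  \<open>T = (g x - \<mu>)(g x - cnj \<mu>)\<close> commutes with every \<open>g y\<close>, so the Fitting decomposition
  \<open>W = ker T\<^sup>N \<oplus> T\<^sup>N W\<close> (\<open>N = dim V\<close>) splits \<open>W\<close> into invariant parts; an eigenvector for \<open>\<mu>\<close> lies in the
  kernel part, while \<open>T\<close> acts on an eigenvector for \<open>\<nu>\<close> as the nonzero scalar
  \<open>(\<nu> - \<mu>)(\<nu> - cnj \<mu>)\<close>, so both parts are proper. Otherwise the spectrum of every \<open>g x\<close> on \<open>W\<close>
  lies in a conjugate pair \<open>{\<lambda>(x), cnj \<lambda>(x)}\<close>. If \<open>\<lambda>(x)\<close> cannot be chosen non-real for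
  any \<open>x\<close>, the spectrum is a single real number, and it is nonnegative because
  \<open>g x = g (x/2)\<^sup>2\<close>.
\<close>

section \<open>Fitting decomposition\<close>

lemma linear_funpow: "linear (T :: 'a::real_vector \<Rightarrow> 'a) \<Longrightarrow> linear (T ^^ k)"
  by (induction k) (simp_all add: real_vector.linear_id linear_compose del: o_apply)

lemma funpow_commute:
  assumes "\<And>v. B (T v) = T (B v)"
  shows "B ((T ^^ k) v) = (T ^^ k) (B v)"
  by (induction k) (simp_all add: assms)

lemma chain_stable_after_stall:
  assumes stall: "\<exists>k\<le>n. S k = S (Suc k)"
    and propagate: "\<And>k. S k = S (Suc k) \<Longrightarrow> S (Suc k) = S (Suc (Suc k))"
    and "n \<le> m"
  shows "S m = S n"
proof -
  obtain k where "k \<le> n" and k: "S k = S (Suc k)" using stall by blast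
  have const: "S j = S k \<and> S j = S (Suc j)" if "k \<le> j" for j
    using that
  proof (induction j rule: dec_induct)
    case base then show ?case using k by simp
  next
    case (step j) then show ?case using propagate by metis
  qed
  show ?thesis using const[of m] const[of n] \<open>k \<le> n\<close> \<open>n \<le> m\<close> by simp
qed

lemma subspace_psubset_dim_less:
  fixes S T :: "'a::euclidean_space set"
  shows "subspace S \<Longrightarrow> subspace T \<Longrightarrow> S \<subset> T \<Longrightarrow> dim S < dim T"
  using dim_psubset[of S T] by (simp add: span_eq_iff[THEN iffD2])

lemma incseq_subspaces_stall:
  fixes S :: "nat \<Rightarrow> 'a::euclidean_space set"
  assumes sub: "\<And>k. subspace (S k)" and inc: "\<And>k. S k \<subseteq> S (Suc k)"
  shows "\<exists>k\<le>DIM('a). S k = S (Suc k)"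
proof (rule ccontr)
  assume "\<not> ?thesis"
  then have strict: "S k \<subset> S (Suc k)" if "k \<le> DIM('a)" for k
    using inc that by blast
  have "k \<le> dim (S k)" if "k \<le> Suc DIM('a)" for k
    using that
  proof (induction k)
    case (Suc k)
    then have "dim (S k) < dim (S (Suc k))"
      using strict sub by (simp add: subspace_psubset_dim_less)
    with Suc show ?case by simp
  qed simp
  then show False
    using dim_subset_UNIV[of "S (Suc DIM('a))"] by (metis le_refl not_less_eq_eq)
qed

lemma decseq_subspaces_stall:
  fixes S :: "nat \<Rightarrow> 'a::euclidean_space set"
  assumes sub: "\<And>k. subspace (S k)" and dec: "\<And>k. S (Suc k) \<subseteq> S k"
  shows "\<exists>k\<le>DIM('a). S k = S (Suc k)"
proof (rule ccontr)
  assume "\<not> ?thesis"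
  then have strict: "S (Suc k) \<subset> S k" if "k \<le> DIM('a)" for k
    using dec that by blast
  have "dim (S k) + k \<le> DIM('a)" if "k \<le> Suc DIM('a)" for k
    using that
  proof (induction k)
    case 0 show ?case using dim_subset_UNIV by simp
  next
    case (Suc k)
    then have "dim (S (Suc k)) < dim (S k)"
      using strict sub by (simp add: subspace_psubset_dim_less)
    with Suc show ?case by simp
  qed
  from this[of "Suc DIM('a)"] show False by simp
qed

lemma funpow_image_subset:
  assumes "T ` W \<subseteq> W"
  shows "(T ^^ k) ` W \<subseteq> W"
  by (induction k) (use assms in \<open>auto simp: image_comp[symmetric]\<close>)

lemma funpow_kernel_stable:
  fixes T :: "'a::euclidean_space \<Rightarrow> 'a"
  assumes lin: "linear T" and W: "subspace W" and TW: "T ` W \<subseteq> W" and "DIM('a) \<le> m"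
  shows "{v\<in>W. (T ^^ m) v = 0} = {v\<in>W. (T ^^ DIM('a)) v = 0}"
proof -
  define Ker where "Ker k = {v\<in>W. (T ^^ k) v = 0}" for k
  have "subspace (Ker k)" for k
  proof -
    have "Ker k = W \<inter> {v. (T ^^ k) v = 0}" unfolding Ker_def by auto
    then show ?thesis
      using W real_vector.linear_subspace_kernel[OF linear_funpow[OF lin]] by (simp add: subspace_inter)
  qed
  moreover have "Ker k \<subseteq> Ker (Suc k)" for k
    unfolding Ker_def using linear_0[OF lin] by auto
  moreover have "Ker (Suc k) = Ker (Suc (Suc k))" if "Ker k = Ker (Suc k)" for k
  proof -
    have step: "Ker (Suc j) = {v\<in>W. T v \<in> Ker j}" for j
      using TW unfolding Ker_def by (auto simp: funpow_Suc_right simp del: funpow.simps)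
    have "Ker (Suc (Suc k)) = {v\<in>W. T v \<in> Ker (Suc k)}" by (fact step)
    also have "\<dots> = {v\<in>W. T v \<in> Ker k}" by (simp only: that)
    also have "\<dots> = Ker (Suc k)" by (simp only: step)
    finally show ?thesis ..
  qed
  ultimately have "Ker m = Ker DIM('a)"
    using \<open>DIM('a) \<le> m\<close> by (rule chain_stable_after_stall[OF incseq_subspaces_stall])
  then show ?thesis unfolding Ker_def .
qed

lemma funpow_image_stable:
  fixes T :: "'a::euclidean_space \<Rightarrow> 'a"
  assumes lin: "linear T" and W: "subspace W" and TW: "T ` W \<subseteq> W" and "DIM('a) \<le> m"
  shows "(T ^^ m) ` W = (T ^^ DIM('a)) ` W"
proof -
  define Im where "Im k = (T ^^ k) ` W" for k
  have "subspace (Im k)" for k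
    unfolding Im_def using real_vector.linear_subspace_image[OF linear_funpow[OF lin] W] .
  moreover have "Im (Suc k) \<subseteq> Im k" for k
    unfolding Im_def using TW by (auto simp: funpow_Suc_right simp del: funpow.simps)
  moreover have "Im (Suc k) = Im (Suc (Suc k))" if "Im k = Im (Suc k)" for k
  proof -
    have step: "Im (Suc j) = T ` Im j" for j unfolding Im_def by (simp add: image_comp)
    then have "Im (Suc (Suc k)) = T ` Im (Suc k)" .
    also have "\<dots> = T ` Im k" by (simp only: that)
    also have "\<dots> = Im (Suc k)" by (simp only: step)
    finally show ?thesis ..
  qed
  ultimately have "Im m = Im DIM('a)"
    using \<open>DIM('a) \<le> m\<close> by (rule chain_stable_after_stall[OF decseq_subspaces_stall])
  then show ?thesis unfolding Im_def .
qed

definition complementary_in :: "'a::real_vector set \<Rightarrow> 'a set \<Rightarrow> 'a set \<Rightarrow> bool" where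
  "complementary_in W K R \<longleftrightarrow> subspace K \<and> subspace R \<and> K \<subseteq> W \<and> R \<subseteq> W \<and>
     K \<inter> R \<subseteq> {0} \<and> (\<forall>v\<in>W. \<exists>k\<in>K. \<exists>r\<in>R. v = k + r)"

lemma complementary_in_commute: "complementary_in W K R \<Longrightarrow> complementary_in W R K"
  unfolding complementary_in_def by (metis Int_commute add.commute)

lemma complementary_in_dim_less:
  fixes W :: "'a::euclidean_space set"
  assumes "complementary_in W K R" and "subspace W" and "R \<noteq> {0}"
  shows "dim K < dim W"
proof -
  have "subspace K" "subspace R" "K \<subseteq> W" "R \<subseteq> W" "K \<inter> R \<subseteq> {0}"
    using assms(1) unfolding complementary_in_def by auto
  moreover obtain r where "r \<in> R" "r \<noteq> 0"
    using \<open>subspace R\<close> \<open>R \<noteq> {0}\<close> real_vector.subspace_0 by blast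
  ultimately have "K \<subset> W" by blast
  then show ?thesis using \<open>subspace K\<close> \<open>subspace W\<close> by (rule subspace_psubset_dim_less[rotated 2])
qed

lemma fitting_decomposition:
  fixes T :: "'a::euclidean_space \<Rightarrow> 'a"
  assumes lin: "linear T" and W: "subspace W" and TW: "T ` W \<subseteq> W"
  shows "complementary_in W {v\<in>W. (T ^^ DIM('a)) v = 0} ((T ^^ DIM('a)) ` W)"
proof -
  define N where "N = DIM('a)"
  define K where "K = {v\<in>W. (T ^^ N) v = 0}"
  define R where "R = (T ^^ N) ` W"
  have linN: "linear (T ^^ N)" using lin by (rule linear_funpow)
  have K2: "{v\<in>W. (T ^^ (N + N)) v = 0} = K" and R2: "(T ^^ (N + N)) ` W = R"
    unfolding K_def R_def N_def
    using funpow_kernel_stable[OF assms, of "N + N"] funpow_image_stable[OF assms, of "N + N"]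
    by (simp_all add: N_def)
  have "subspace K"
    unfolding K_def using W real_vector.linear_subspace_kernel[OF linN]
    by (simp add: subspace_inter Collect_conj_eq)
  moreover have "subspace R"
    unfolding R_def using real_vector.linear_subspace_image[OF linN W] .
  moreover have "R \<subseteq> W" unfolding R_def using funpow_image_subset[OF TW] .
  moreover have "K \<inter> R \<subseteq> {0}"
  proof
    fix v assume "v \<in> K \<inter> R"
    then obtain w where w: "w \<in> W" "v = (T ^^ N) w" "(T ^^ N) v = 0"
      unfolding K_def R_def by auto
    then have "w \<in> K" using K2 by (auto simp: funpow_add)
    then show "v \<in> {0}" using w unfolding K_def by simp
  qed
  moreover have "\<exists>k\<in>K. \<exists>r\<in>R. v = k + r" if v: "v \<in> W" for v
  proof -
    have "(T ^^ N) v \<in> (T ^^ (N + N)) ` W" using v R2 unfolding R_def by blast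
    then obtain w where w: "w \<in> W" "(T ^^ N) v = (T ^^ N) ((T ^^ N) w)"
      by (auto simp: funpow_add)
    define r where "r = (T ^^ N) w"
    have "r \<in> R" unfolding R_def r_def using w by blast
    have "v - r \<in> W" using v \<open>r \<in> R\<close> \<open>R \<subseteq> W\<close> W by (blast intro: real_vector.subspace_diff)
    moreover have "(T ^^ N) (v - r) = 0" using w(2) by (simp add: r_def linear_diff[OF linN])
    ultimately have "v - r \<in> K" unfolding K_def by blast
    with \<open>r \<in> R\<close> show ?thesis by (metis diff_add_cancel)
  qed
  moreover have "K \<subseteq> W" unfolding K_def by blast
  ultimately have "complementary_in W K R" unfolding complementary_in_def by blast
  then show ?thesis by (simp only: K_def R_def N_def)
qed

lemma commuting_map_preserves_funpow_kernel:
  assumes "linear B" and "B ` W \<subseteq> W" and "\<And>v. B (T v) = T (B v)"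
  shows "B ` {v\<in>W. (T ^^ k) v = 0} \<subseteq> {v\<in>W. (T ^^ k) v = 0}"
  using assms(2) linear_0[OF assms(1)] by (auto simp flip: funpow_commute[of B T, OF assms(3)])

lemma commuting_map_preserves_funpow_image:
  assumes "B ` W \<subseteq> W" and "\<And>v. B (T v) = T (B v)"
  shows "B ` (T ^^ k) ` W \<subseteq> (T ^^ k) ` W"
  using assms(1) by (auto simp: funpow_commute[of B T, OF assms(2)])

section \<open>Finite direct sums\<close>

lemma complementary_in_sum_eq_0:
  assumes "complementary_in W K R" and "k \<in> K" and "r \<in> R" and "k + r = 0"
  shows "k = 0 \<and> r = 0"
proof -
  have "subspace R" and KR0: "K \<inter> R \<subseteq> {0}" using assms(1) unfolding complementary_in_def by auto
  moreover have "k = - r" using \<open>k + r = 0\<close> by (simp add: eq_neg_iff_add_eq_0)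
  ultimately have "k \<in> R" using \<open>r \<in> R\<close> by (simp add: real_vector.subspace_neg)
  then show ?thesis using KR0 \<open>k \<in> K\<close> \<open>k + r = 0\<close> by auto
qed

definition direct_sum_on :: "'a::real_vector set \<Rightarrow> nat \<Rightarrow> (nat \<Rightarrow> 'a set) \<Rightarrow> bool" where
  "direct_sum_on W n Vs \<longleftrightarrow> (\<forall>i<n. subspace (Vs i) \<and> Vs i \<subseteq> W) \<and>
     (\<forall>v\<in>W. \<exists>f. (\<forall>i<n. f i \<in> Vs i) \<and> v = (\<Sum>i<n. f i)) \<and>
     (\<forall>f. (\<forall>i<n. f i \<in> Vs i) \<longrightarrow> (\<Sum>i<n. f i) = 0 \<longrightarrow> (\<forall>i<n. f i = 0))"

lemma direct_sum_on_single: "subspace W \<Longrightarrow> direct_sum_on W 1 (\<lambda>_. W)"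
  unfolding direct_sum_on_def by auto

definition append_seq :: "nat \<Rightarrow> (nat \<Rightarrow> 'b) \<Rightarrow> (nat \<Rightarrow> 'b) \<Rightarrow> nat \<Rightarrow> 'b" where
  "append_seq n f h i = (if i < n then f i else h (i - n))"

lemma all_less_add_iff:
  "(\<forall>i < m + n. P i) \<longleftrightarrow> (\<forall>i<m. P i) \<and> (\<forall>i<n. P (m + i))" for m n :: nat
proof safe
  fix i assume P: "\<forall>i<m. P i" "\<forall>i<n. P (m + i)" and "i < m + n"
  show "P i"
  proof (cases "i < m")
    case False
    then have "i = m + (i - m)" and "i - m < n" using \<open>i < m + n\<close> by simp_all
    then show ?thesis using P(2) by metis
  qed (use P in simp)
qed simp_all

lemma sum_lessThan_add: "(\<Sum>i < m + n::nat. f i) = (\<Sum>i<m. f i) + (\<Sum>i<n. f (m + i))"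
  by (induction n) (simp_all add: add.assoc)

lemma direct_sum_on_append:
  assumes KR: "complementary_in W K R"
    and dK: "direct_sum_on K n1 V1" and dR: "direct_sum_on R n2 V2"
  shows "direct_sum_on W (n1 + n2) (append_seq n1 V1 V2)"
proof -
  have K: "subspace K" "K \<subseteq> W" and R: "subspace R" "R \<subseteq> W"
    and KRspan: "\<forall>v\<in>W. \<exists>k\<in>K. \<exists>r\<in>R. v = k + r"
    using KR unfolding complementary_in_def by auto
  have sub1: "\<forall>i<n1. subspace (V1 i) \<and> V1 i \<subseteq> K"
    and span1: "\<forall>v\<in>K. \<exists>f. (\<forall>i<n1. f i \<in> V1 i) \<and> v = (\<Sum>i<n1. f i)"
    and indep1: "\<forall>f. (\<forall>i<n1. f i \<in> V1 i) \<longrightarrow> (\<Sum>i<n1. f i) = 0 \<longrightarrow> (\<forall>i<n1. f i = 0)"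
    using dK unfolding direct_sum_on_def by auto
  have sub2: "\<forall>i<n2. subspace (V2 i) \<and> V2 i \<subseteq> R"
    and span2: "\<forall>v\<in>R. \<exists>f. (\<forall>i<n2. f i \<in> V2 i) \<and> v = (\<Sum>i<n2. f i)"
    and indep2: "\<forall>f. (\<forall>i<n2. f i \<in> V2 i) \<longrightarrow> (\<Sum>i<n2. f i) = 0 \<longrightarrow> (\<forall>i<n2. f i = 0)"
    using dR unfolding direct_sum_on_def by auto
  have "\<forall>i<n1. subspace (V1 i) \<and> V1 i \<subseteq> W" "\<forall>i<n2. subspace (V2 i) \<and> V2 i \<subseteq> W"
    using sub1 sub2 K(2) R(2) by blast+
  then have "\<forall>i<n1 + n2. subspace (append_seq n1 V1 V2 i) \<and> append_seq n1 V1 V2 i \<subseteq> W"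
    unfolding all_less_add_iff by (simp add: append_seq_def)
  moreover have "\<exists>f. (\<forall>i<n1 + n2. f i \<in> append_seq n1 V1 V2 i) \<and> v = (\<Sum>i<n1 + n2. f i)"
    if "v \<in> W" for v
  proof -
    obtain k r where "k \<in> K" "r \<in> R" "v = k + r" using KRspan \<open>v \<in> W\<close> by blast
    moreover obtain f1 where "\<forall>i<n1. f1 i \<in> V1 i" "k = (\<Sum>i<n1. f1 i)"
      using span1 \<open>k \<in> K\<close> by blast
    moreover obtain f2 where "\<forall>i<n2. f2 i \<in> V2 i" "r = (\<Sum>i<n2. f2 i)"
      using span2 \<open>r \<in> R\<close> by blast
    ultimately show ?thesis
      by (intro exI[of _ "append_seq n1 f1 f2"])
        (simp add: all_less_add_iff sum_lessThan_add append_seq_def)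
  qed
  moreover have "\<forall>i<n1 + n2. f i = 0"
    if f: "\<forall>i<n1 + n2. f i \<in> append_seq n1 V1 V2 i" and sum: "(\<Sum>i<n1 + n2. f i) = 0" for f
  proof -
    have f1: "\<forall>i<n1. f i \<in> V1 i" and f2: "\<forall>i<n2. f (n1 + i) \<in> V2 i"
      using f unfolding all_less_add_iff append_seq_def by simp_all
    have "(\<Sum>i<n1. f i) \<in> K"
      using f1 sub1 by (intro real_vector.subspace_sum[OF K(1)]) blast
    moreover have "(\<Sum>i<n2. f (n1 + i)) \<in> R"
      using f2 sub2 by (intro real_vector.subspace_sum[OF R(1)]) blast
    moreover have "(\<Sum>i<n1. f i) + (\<Sum>i<n2. f (n1 + i)) = 0"
      using sum by (simp add: sum_lessThan_add)
    ultimately have z1: "(\<Sum>i<n1. f i) = 0" and z2: "(\<Sum>i<n2. f (n1 + i)) = 0"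
      using complementary_in_sum_eq_0[OF KR] by blast+
    have "\<forall>i<n1. f i = 0" using spec[OF indep1, of f] f1 z1 by simp
    moreover have "\<forall>i<n2. f (n1 + i) = 0" using spec[OF indep2, of "\<lambda>i. f (n1 + i)"] f2 z2 by simp
    ultimately show ?thesis unfolding all_less_add_iff by blast
  qed
  ultimately show ?thesis unfolding direct_sum_on_def by blast
qed

lemma is_direct_sum_if_direct_sum_on_UNIV:
  assumes "direct_sum_on UNIV n Vs"
  shows "is_direct_sum n Vs"
proof -
  have sub: "\<forall>i<n. subspace (Vs i)"
    and span: "\<forall>v. \<exists>f. (\<forall>i<n. f i \<in> Vs i) \<and> v = (\<Sum>i<n. f i)"
    and indep: "\<forall>f. (\<forall>i<n. f i \<in> Vs i) \<longrightarrow> (\<Sum>i<n. f i) = 0 \<longrightarrow> (\<forall>i<n. f i = 0)"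
    using assms unfolding direct_sum_on_def by auto
  have "\<exists>!f. (\<forall>i<n. f i \<in> Vs i) \<and> (\<forall>i\<ge>n. f i = 0) \<and> v = (\<Sum>i<n. f i)" (is "\<exists>!f. ?P f") for v
  proof -
    obtain f where f: "\<forall>i<n. f i \<in> Vs i" "v = (\<Sum>i<n. f i)" using span by blast
    show ?thesis
    proof (rule ex1I)
      show "?P (\<lambda>i. if i < n then f i else 0)" using f by simp
    next
      fix h assume "?P h"
      have "(\<Sum>i<n. h i - f i) = 0"
        using \<open>?P h\<close> f by (simp add: sum_subtractf)
      moreover have "\<forall>i<n. h i - f i \<in> Vs i"
        using \<open>?P h\<close> f sub by (blast intro: real_vector.subspace_diff)
      ultimately have "\<forall>i<n. h i = f i" using indep by fastforce
      then show "h = (\<lambda>i. if i < n then f i else 0)" using \<open>?P h\<close> by auto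
    qed
  qed
  with sub show ?thesis unfolding is_direct_sum_def by blast
qed

section \<open>Complex eigenvalues of real operators\<close>

definition eigenpair :: "('a::real_vector \<Rightarrow> 'a) \<Rightarrow> complex \<Rightarrow> 'a \<Rightarrow> 'a \<Rightarrow> bool" where
  "eigenpair A c u w \<longleftrightarrow> A u = Re c *\<^sub>R u - Im c *\<^sub>R w \<and> A w = Im c *\<^sub>R u + Re c *\<^sub>R w"

lemma complex_eigenvalue_on_iff_eigenpair:
  "complex_eigenvalue_on A W c \<longleftrightarrow>
     (\<exists>u w. u \<in> W \<and> w \<in> W \<and> (u \<noteq> 0 \<or> w \<noteq> 0) \<and> eigenpair A c u w)"
  unfolding complex_eigenvalue_on_def eigenpair_def by simp

lemma eigenpair_funpow:
  assumes lin: "linear A" and "eigenpair A c u w"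
  shows "eigenpair (A ^^ k) (c ^ k) u w"
proof (induction k)
  case (Suc k)
  have IH: "(A ^^ k) u = Re (c ^ k) *\<^sub>R u - Im (c ^ k) *\<^sub>R w"
    "(A ^^ k) w = Im (c ^ k) *\<^sub>R u + Re (c ^ k) *\<^sub>R w"
    using Suc unfolding eigenpair_def by auto
  have A: "A u = Re c *\<^sub>R u - Im c *\<^sub>R w" "A w = Im c *\<^sub>R u + Re c *\<^sub>R w"
    using assms(2) unfolding eigenpair_def by auto
  show ?case
    unfolding eigenpair_def funpow.simps(2) o_apply IH power_Suc
    by (simp add: linear_diff[OF lin] linear_add[OF lin] linear_scale[OF lin] A algebra_simps)
qed (simp add: eigenpair_def)

lemma complex_eigenvalue_on_funpow:
  "linear A \<Longrightarrow> complex_eigenvalue_on A W c \<Longrightarrow> complex_eigenvalue_on (A ^^ k) W (c ^ k)"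
  unfolding complex_eigenvalue_on_iff_eigenpair by (meson eigenpair_funpow)

lemma eigenpair_eq_0_if_annihilated:
  assumes "eigenpair L c u w" and "L u = 0" and "L w = 0" and "c \<noteq> 0"
  shows "u = 0 \<and> w = 0"
proof -
  have 1: "Re c *\<^sub>R u = Im c *\<^sub>R w" and 2: "Re c *\<^sub>R w = - (Im c *\<^sub>R u)"
    using assms(1-3) unfolding eigenpair_def by (auto simp: eq_neg_iff_add_eq_0 add.commute)
  have n: "(Re c)\<^sup>2 + (Im c)\<^sup>2 \<noteq> 0"
    using \<open>c \<noteq> 0\<close> by (simp add: complex_eq_iff add_nonneg_eq_0_iff)
  have "((Re c)\<^sup>2 + (Im c)\<^sup>2) *\<^sub>R u = Re c *\<^sub>R (Re c *\<^sub>R u) + Im c *\<^sub>R (Im c *\<^sub>R u)"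
    by (simp add: power2_eq_square scaleR_add_left)
  also have "\<dots> = Im c *\<^sub>R (Re c *\<^sub>R w) + Im c *\<^sub>R (Im c *\<^sub>R u)"
    by (simp add: 1 scaleR_left_commute)
  also have "\<dots> = 0" by (simp add: 2)
  finally have "u = 0" using n by auto
  moreover have "Re c *\<^sub>R w = 0" "Im c *\<^sub>R w = 0" using 1 2 \<open>u = 0\<close> by auto
  ultimately show ?thesis using n by (auto simp: power2_eq_square)
qed

text \<open>The real form of \<open>(A - \<mu>)(A - cnj \<mu>)\<close>.\<close>
definition quadratic_factor :: "('a::real_vector \<Rightarrow> 'a) \<Rightarrow> complex \<Rightarrow> 'a \<Rightarrow> 'a" where
  "quadratic_factor A \<mu> v = A (A v) - (2 * Re \<mu>) *\<^sub>R A v + (cmod \<mu>)\<^sup>2 *\<^sub>R v"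

lemma linear_quadratic_factor: "linear A \<Longrightarrow> linear (quadratic_factor A \<mu>)"
  unfolding linear_iff quadratic_factor_def
  by (simp add: linear_add linear_scale algebra_simps)

lemma eigenpair_quadratic_factor:
  assumes lin: "linear A" and "eigenpair A \<nu> u w"
  shows "eigenpair (quadratic_factor A \<mu>) ((\<nu> - \<mu>) * (\<nu> - cnj \<mu>)) u w"
proof -
  have A: "A u = Re \<nu> *\<^sub>R u - Im \<nu> *\<^sub>R w" "A w = Im \<nu> *\<^sub>R u + Re \<nu> *\<^sub>R w"
    using assms(2) unfolding eigenpair_def by auto
  have norm: "(cmod \<mu>)\<^sup>2 = Re \<mu> * Re \<mu> + Im \<mu> * Im \<mu>"
    using cmod_power2[of \<mu>] by (simp add: power2_eq_square)
  show ?thesis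
    unfolding eigenpair_def quadratic_factor_def A norm
    by (simp add: linear_diff[OF lin] linear_add[OF lin] linear_scale[OF lin] A algebra_simps;
        simp add: scaleR_add_left[symmetric])
qed

lemma quadratic_factor_invariant:
  assumes "subspace W" and "A ` W \<subseteq> W"
  shows "quadratic_factor A \<mu> ` W \<subseteq> W"
  using assms unfolding quadratic_factor_def
  by (auto intro!: real_vector.subspace_add real_vector.subspace_diff real_vector.subspace_scale)

lemma quadratic_factor_commute:
  assumes "linear B" and "\<And>v. B (A v) = A (B v)"
  shows "B (quadratic_factor A \<mu> v) = quadratic_factor A \<mu> (B v)"
  unfolding quadratic_factor_def
  by (simp add: linear_add[OF assms(1)] linear_diff[OF assms(1)] linear_scale[OF assms(1)] assms(2))

lemma quadratic_factor_funpow_kernel_nonzero: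
  assumes lin: "linear A" and \<mu>: "complex_eigenvalue_on A W \<mu>" and "0 < k"
  shows "{v\<in>W. (quadratic_factor A \<mu> ^^ k) v = 0} \<noteq> {0}"
proof -
  obtain u w where uw: "u \<in> W" "w \<in> W" "u \<noteq> 0 \<or> w \<noteq> 0" "eigenpair A \<mu> u w"
    using \<mu> unfolding complex_eigenvalue_on_iff_eigenpair by blast
  have "eigenpair (quadratic_factor A \<mu>) 0 u w"
    using eigenpair_quadratic_factor[OF lin uw(4), of \<mu>] by simp
  then have "eigenpair (quadratic_factor A \<mu> ^^ k) 0 u w"
    using eigenpair_funpow[OF linear_quadratic_factor[OF lin], of \<mu> 0 u w k] \<open>0 < k\<close>
    by (simp add: zero_power)
  then have "u \<in> {v\<in>W. (quadratic_factor A \<mu> ^^ k) v = 0}" "w \<in> {v\<in>W. (quadratic_factor A \<mu> ^^ k) v = 0}"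
    using uw unfolding eigenpair_def by auto
  then show ?thesis using uw(3) by blast
qed

lemma quadratic_factor_funpow_image_nonzero:
  assumes lin: "linear A" and \<nu>: "complex_eigenvalue_on A W \<nu>" and "\<nu> \<noteq> \<mu>" and "\<nu> \<noteq> cnj \<mu>"
  shows "(quadratic_factor A \<mu> ^^ k) ` W \<noteq> {0}"
proof
  assume image_0: "(quadratic_factor A \<mu> ^^ k) ` W = {0}"
  obtain u w where uw: "u \<in> W" "w \<in> W" "u \<noteq> 0 \<or> w \<noteq> 0" "eigenpair A \<nu> u w"
    using \<nu> unfolding complex_eigenvalue_on_iff_eigenpair by blast
  define c where "c = (\<nu> - \<mu>) * (\<nu> - cnj \<mu>)"
  have "eigenpair (quadratic_factor A \<mu>) c u w"
    unfolding c_def by (rule eigenpair_quadratic_factor[OF lin uw(4)])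
  then have "eigenpair (quadratic_factor A \<mu> ^^ k) (c ^ k) u w"
    by (rule eigenpair_funpow[OF linear_quadratic_factor[OF lin]])
  moreover have "(quadratic_factor A \<mu> ^^ k) u = 0" "(quadratic_factor A \<mu> ^^ k) w = 0"
    using uw image_0 by auto
  moreover have "c ^ k \<noteq> 0" unfolding c_def using \<open>\<nu> \<noteq> \<mu>\<close> \<open>\<nu> \<noteq> cnj \<mu>\<close> by simp
  ultimately have "u = 0 \<and> w = 0" by (rule eigenpair_eq_0_if_annihilated)
  with uw(3) show False by simp
qed

definition spectrum_in_pair :: "('a::real_vector \<Rightarrow> 'a) \<Rightarrow> 'a set \<Rightarrow> complex \<Rightarrow> bool" where
  "spectrum_in_pair A V \<mu> \<longleftrightarrow> (\<forall>\<nu>. complex_eigenvalue_on A V \<nu> \<longrightarrow> \<nu> = \<mu> \<or> \<nu> = cnj \<mu>)"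

lemma spectrum_eq_real_singleton:
  assumes "spectrum_in_pair A V \<mu>" and real: "\<forall>\<mu>'. spectrum_in_pair A V \<mu>' \<longrightarrow> \<mu>' \<in> \<real>"
  shows "\<exists>a::real. \<forall>\<nu>. complex_eigenvalue_on A V \<nu> \<longleftrightarrow> \<nu> = complex_of_real a"
proof -
  \<comment> \<open>Without eigenvalues, \<open>\<i>\<close> would bound the spectrum.\<close>
  have "\<i> \<notin> \<real>" by (simp add: complex_is_Real_iff)
  then obtain \<nu>\<^sub>0 where "complex_eigenvalue_on A V \<nu>\<^sub>0"
    using real unfolding spectrum_in_pair_def by blast
  moreover have "\<mu> \<in> \<real>" using real assms(1) by blast
  then obtain a where a: "\<mu> = complex_of_real a" by (rule Reals_cases)
  ultimately have "complex_eigenvalue_on A V \<nu> \<longleftrightarrow> \<nu> = complex_of_real a" for \<nu>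
    using assms(1) unfolding spectrum_in_pair_def a by auto
  then show ?thesis by blast
qed

section \<open>Decomposing a semigroup\<close>

lemma lin_semigroup_linear: "lin_semigroup g \<Longrightarrow> 0 \<le> x \<Longrightarrow> linear (g x)"
  unfolding lin_semigroup_def by auto

lemma lin_semigroup_commute:
  assumes "lin_semigroup g" and "0 \<le> x" and "0 \<le> y"
  shows "g x (g y v) = g y (g x v)"
proof -
  have "g (x + y) = g x \<circ> g y" and "g (y + x) = g y \<circ> g x"
    using assms unfolding lin_semigroup_def by auto
  then show ?thesis by (metis add.commute comp_apply)
qed

lemma lin_semigroup_half: "lin_semigroup g \<Longrightarrow> 0 \<le> x \<Longrightarrow> g x = g (x / 2) ^^ 2"
proof -
  assume "lin_semigroup g" and "0 \<le> x"
  moreover have "0 \<le> x / 2" using \<open>0 \<le> x\<close> by simp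
  ultimately have "g (x / 2 + x / 2) = g (x / 2) \<circ> g (x / 2)"
    unfolding lin_semigroup_def by blast
  then show ?thesis by (simp add: numeral_2_eq_2)
qed

definition primary_for :: "(real \<Rightarrow> 'a::real_vector \<Rightarrow> 'a) \<Rightarrow> 'a set \<Rightarrow> bool" where
  "primary_for g V \<longleftrightarrow> subspace V \<and> V \<noteq> {0} \<and> (\<forall>x\<ge>0. g x ` V \<subseteq> V) \<and>
     (\<forall>x\<ge>0. \<exists>\<mu>. spectrum_in_pair (g x) V \<mu>)"

lemma lin_semigroup_invariant_split:
  fixes g :: "real \<Rightarrow> 'a::euclidean_space \<Rightarrow> 'a"
  assumes sg: "lin_semigroup g" and W: "subspace W" and inv: "\<forall>y\<ge>0. g y ` W \<subseteq> W"
    and x: "0 \<le> x" and \<mu>: "complex_eigenvalue_on (g x) W \<mu>"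
    and \<nu>: "complex_eigenvalue_on (g x) W \<nu>" and "\<nu> \<noteq> \<mu>" and "\<nu> \<noteq> cnj \<mu>"
  obtains K R where "complementary_in W K R" and "K \<noteq> {0}" and "R \<noteq> {0}"
    and "\<forall>y\<ge>0. g y ` K \<subseteq> K" and "\<forall>y\<ge>0. g y ` R \<subseteq> R"
proof -
  define T where "T = quadratic_factor (g x) \<mu>"
  define K where "K = {v\<in>W. (T ^^ DIM('a)) v = 0}"
  define R where "R = (T ^^ DIM('a)) ` W"
  have lin: "linear (g x)" using sg x by (rule lin_semigroup_linear)
  then have linT: "linear T" unfolding T_def by (rule linear_quadratic_factor)
  have TW: "T ` W \<subseteq> W" unfolding T_def using W inv x by (intro quadratic_factor_invariant) auto
  have "complementary_in W K R"
    unfolding K_def R_def using linT W TW by (rule fitting_decomposition)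
  moreover have "g y ` K \<subseteq> K" and "g y ` R \<subseteq> R" if "0 \<le> y" for y
  proof -
    have lin_y: "linear (g y)" using sg that by (rule lin_semigroup_linear)
    have comm: "g y (T v) = T (g y v)" for v
      unfolding T_def using lin_y lin_semigroup_commute[OF sg that x] by (rule quadratic_factor_commute)
    have gW: "g y ` W \<subseteq> W" using inv that by blast
    show "g y ` K \<subseteq> K"
      unfolding K_def using lin_y gW comm by (rule commuting_map_preserves_funpow_kernel)
    show "g y ` R \<subseteq> R"
      unfolding R_def using gW comm by (rule commuting_map_preserves_funpow_image)
  qed
  moreover have "K \<noteq> {0}"
    unfolding K_def T_def using lin \<mu> by (rule quadratic_factor_funpow_kernel_nonzero) simp
  moreover have "R \<noteq> {0}"
    unfolding R_def T_def using lin \<nu> \<open>\<nu> \<noteq> \<mu>\<close> \<open>\<nu> \<noteq> cnj \<mu>\<close>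
    by (rule quadratic_factor_funpow_image_nonzero)
  ultimately show ?thesis using that by blast
qed

lemma primary_decomposition:
  fixes g :: "real \<Rightarrow> 'a::euclidean_space \<Rightarrow> 'a"
  assumes sg: "lin_semigroup g"
  shows "subspace W \<Longrightarrow> W \<noteq> {0} \<Longrightarrow> \<forall>x\<ge>0. g x ` W \<subseteq> W \<Longrightarrow>
    \<exists>n Vs. direct_sum_on W n Vs \<and> (\<forall>i<n. primary_for g (Vs i))"
proof (induction "dim W" arbitrary: W rule: less_induct)
  case less
  show ?case
  proof (cases "\<forall>x\<ge>0. \<exists>\<mu>. spectrum_in_pair (g x) W \<mu>")
    case True
    then have "primary_for g W" using less.prems unfolding primary_for_def by blast
    then show ?thesis using direct_sum_on_single[OF less.prems(1)] by fastforce
  next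
    case False
    then obtain x where x: "0 \<le> x" and wide: "\<And>\<mu>. \<not> spectrum_in_pair (g x) W \<mu>" by blast
    obtain \<mu> where \<mu>: "complex_eigenvalue_on (g x) W \<mu>"
      using wide[of 0] unfolding spectrum_in_pair_def by blast
    obtain \<nu> where \<nu>: "complex_eigenvalue_on (g x) W \<nu>" "\<nu> \<noteq> \<mu>" "\<nu> \<noteq> cnj \<mu>"
      using wide[of \<mu>] unfolding spectrum_in_pair_def by blast
    obtain K R where KR: "complementary_in W K R" "K \<noteq> {0}" "R \<noteq> {0}"
      and inv: "\<forall>y\<ge>0. g y ` K \<subseteq> K" "\<forall>y\<ge>0. g y ` R \<subseteq> R"
      using lin_semigroup_invariant_split[OF sg less.prems(1,3) x \<mu> \<nu>] .
    have "subspace K" "subspace R" using KR(1) unfolding complementary_in_def by auto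
    moreover have "dim K < dim W" "dim R < dim W"
      using complementary_in_dim_less[OF KR(1) less.prems(1) KR(3)]
        complementary_in_dim_less[OF complementary_in_commute[OF KR(1)] less.prems(1) KR(2)]
      by auto
    ultimately obtain n1 V1 n2 V2 where
      "direct_sum_on K n1 V1" "\<forall>i<n1. primary_for g (V1 i)"
      "direct_sum_on R n2 V2" "\<forall>i<n2. primary_for g (V2 i)"
      using less.hyps[of K] less.hyps[of R] KR(2,3) inv by blast
    then have "direct_sum_on W (n1 + n2) (append_seq n1 V1 V2)"
      and "\<forall>i<n1 + n2. primary_for g (append_seq n1 V1 V2 i)"
      using direct_sum_on_append[OF KR(1)] by (auto simp: append_seq_def)
    then show ?thesis by blast
  qed
qed

lemma primary_for_dim_ge_1:
  fixes V :: "'a::euclidean_space set"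
  assumes "primary_for g V"
  shows "1 \<le> dim V"
proof -
  have "\<not> V \<subseteq> {0}" using assms real_vector.subspace_0 unfolding primary_for_def by blast
  then have "dim V \<noteq> 0" using dim_eq_0 by blast
  then show ?thesis by linarith
qed

definition real_or_complex_block :: "(real \<Rightarrow> 'a::real_vector \<Rightarrow> 'a) \<Rightarrow> 'a set \<Rightarrow> bool" where
  "real_or_complex_block g V \<longleftrightarrow>
     (\<forall>x\<ge>0. \<exists>lam::real. lam \<ge> 0 \<and>
        (\<forall>\<mu>. complex_eigenvalue_on (g x) V \<mu> \<longleftrightarrow> \<mu> = complex_of_real lam)) \<or>
     (\<exists>lam::real \<Rightarrow> complex. (\<forall>x\<ge>0. spectrum_in_pair (g x) V (lam x)) \<and> (\<exists>x\<ge>0. lam x \<notin> \<real>))"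

lemma primary_for_real_or_complex_block:
  fixes g :: "real \<Rightarrow> 'a::euclidean_space \<Rightarrow> 'a"
  assumes sg: "lin_semigroup g" and "primary_for g V"
  shows "real_or_complex_block g V"
proof -
  have pair: "\<forall>x\<ge>0. \<exists>\<mu>. spectrum_in_pair (g x) V \<mu>"
    using assms(2) unfolding primary_for_def by blast
  show ?thesis
  proof (cases "\<exists>x\<ge>0. \<exists>\<mu>. \<mu> \<notin> \<real> \<and> spectrum_in_pair (g x) V \<mu>")
  case True
  then obtain x\<^sub>0 m where "0 \<le> x\<^sub>0" "m \<notin> \<real>" "spectrum_in_pair (g x\<^sub>0) V m" by blast
  moreover obtain mu where "\<forall>x\<ge>0. spectrum_in_pair (g x) V (mu x)"
    using pair by metis
  ultimately have "\<forall>x\<ge>0. spectrum_in_pair (g x) V ((mu(x\<^sub>0 := m)) x)" and "(mu(x\<^sub>0 := m)) x\<^sub>0 \<notin> \<real>"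
    by auto
  then show ?thesis
    unfolding real_or_complex_block_def using \<open>0 \<le> x\<^sub>0\<close> by blast
next
  case False
  have single: "\<exists>a. \<forall>\<nu>. complex_eigenvalue_on (g x) V \<nu> \<longleftrightarrow> \<nu> = complex_of_real a" if x: "0 \<le> x" for x
  proof -
    obtain \<mu> where "spectrum_in_pair (g x) V \<mu>" using pair x by blast
    moreover have "\<forall>\<mu>'. spectrum_in_pair (g x) V \<mu>' \<longrightarrow> \<mu>' \<in> \<real>" using False x by blast
    ultimately show ?thesis by (rule spectrum_eq_real_singleton)
  qed
  have "\<exists>lam::real. lam \<ge> 0 \<and> (\<forall>\<mu>. complex_eigenvalue_on (g x) V \<mu> \<longleftrightarrow> \<mu> = complex_of_real lam)"
    if "0 \<le> x" for x
  proof -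
    obtain a where a: "\<forall>\<nu>. complex_eigenvalue_on (g x) V \<nu> \<longleftrightarrow> \<nu> = complex_of_real a"
      using single \<open>0 \<le> x\<close> by blast
    obtain b where "\<forall>\<nu>. complex_eigenvalue_on (g (x / 2)) V \<nu> \<longleftrightarrow> \<nu> = complex_of_real b"
      using single[of "x / 2"] \<open>0 \<le> x\<close> by auto
    then have "complex_eigenvalue_on (g (x / 2) ^^ 2) V (complex_of_real b ^ 2)"
      using \<open>0 \<le> x\<close> by (intro complex_eigenvalue_on_funpow lin_semigroup_linear[OF sg]) auto
    then have "complex_of_real (b ^ 2) = complex_of_real a"
      using a lin_semigroup_half[OF sg \<open>0 \<le> x\<close>] by simp
    then have "a = b\<^sup>2" by (simp only: of_real_eq_iff)
    then have "0 \<le> a" by simp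
    with a show ?thesis by blast
  qed
  then show ?thesis unfolding real_or_complex_block_def by blast
qed
qed

theorem mainTheorem2:
  fixes g :: "real \<Rightarrow> 'a::euclidean_space \<Rightarrow> 'a"
  assumes "lin_semigroup g"
  shows "\<exists>n Vs. is_direct_sum n Vs \<and>
    (\<forall>i<n. dim (Vs i) \<ge> 1 \<and> (\<forall>x\<ge>0. g x ` Vs i \<subseteq> Vs i) \<and>
      ((\<forall>x\<ge>0. \<exists>lam::real. lam \<ge> 0 \<and>
           (\<forall>\<mu>. complex_eigenvalue_on (g x) (Vs i) \<mu> \<longleftrightarrow> \<mu> = complex_of_real lam))
       \<or>
       (\<exists>lam::real \<Rightarrow> complex.
           (\<forall>x\<ge>0. \<forall>\<mu>. complex_eigenvalue_on (g x) (Vs i) \<mu> \<longrightarrow> \<mu> = lam x \<or> \<mu> = cnj (lam x)) \<and>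
           (\<exists>x\<ge>0. lam x \<notin> \<real>))))"
proof -
  have "(UNIV :: 'a set) \<noteq> {0}"
    using nonzero_Basis nonempty_Basis by blast
  then obtain n Vs where "direct_sum_on UNIV n Vs" and primary: "\<forall>i<n. primary_for g (Vs i)"
    using primary_decomposition[OF assms real_vector.subspace_UNIV] by blast
  then have "is_direct_sum n Vs" by (blast intro: is_direct_sum_if_direct_sum_on_UNIV)
  moreover have "1 \<le> dim (Vs i) \<and> (\<forall>x\<ge>0. g x ` Vs i \<subseteq> Vs i) \<and> real_or_complex_block g (Vs i)"
    if "i < n" for i
  proof -
    have p: "primary_for g (Vs i)" using primary that by blast
    then have "\<forall>x\<ge>0. g x ` Vs i \<subseteq> Vs i" unfolding primary_for_def by blast
    with p show ?thesis
      using primary_for_dim_ge_1 primary_for_real_or_complex_block[OF assms] by blast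
  qed
  ultimately show ?thesis
    unfolding real_or_complex_block_def spectrum_in_pair_def by (intro exI[of _ n] exI[of _ Vs]) blast
qed

end
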